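(* Let $n_c = n_c(n) \to \infty$ with $n_c < n/2$. Let $\rho \in (0,1)$ and $\beta \in (0,1)$ be fixed scalars. Suppose $R \in [0,1]^{n_c\times n_c}$ satisfies $R_{uv} < \rho$ for all entries, and suppose $\Lambda^c \in [0,1]^{n_c \times n_c}$ satisfies, entrywise, $\Lambda^c_{uv} \le \beta$ and $\Lambda^c_{uv} = \omega(n_c^{-1}\log n_c)$ (uniformly over off-diagonal entries). Then for every $\epsilon \in (0, 1-\beta-(1-\beta)\rho)$ there exists a symmetric $\Lambda \in [0,1]^{n\times n}$ whose order-$n_c$ principal submatrix is $\Lambda^c$ such that, for $(A,B) \sim \mathrm{CorrER}(\Lambda,R)$ and using the naive padding scheme, $$\Pr[P^* \neq I_{n_c}] \ \ge\ 1 - \exp\left\{-C\,\epsilon^2 (\log n_c)^2\right\}$$ for all sufficiently large $n_c$, where $C>0$ is a universal constant. Here the event $P^*\neq I_{n_c}$ means that no solution of the padded graph matching problem has order-$n_c$ principal submatrix equal to $I_{n_c}$.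
   Context: Correlated Erdős–Rényi model: let $0 < n_c \le n$, $\Lambda \in [0,1]^{n\times n}$ symmetric with order-$n_c$ principal submatrix $\Lambda^c$, and $R \in [0,1]^{n_c \times n_c}$ symmetric. A pair $(A,B) \sim \mathrm{CorrER}(\Lambda,R)$ consists of adjacency matrices of simple undirected graphs (symmetric, zero diagonal, $\{0,1\}$-valued), $A$ of size $n_c\times n_c$ and $B$ of size $n \times n$, such that: the entries $B_{uv}$, $u<v\le n$, are independent with $B_{uv} \sim \mathrm{Bernoulli}(\Lambda_{uv})$; the entries $A_{uv}$, $u<v\le n_c$, are independent with $A_{uv}\sim\mathrm{Bernoulli}(\Lambda_{uv})$; all entries of $A$ and $B$ are mutually independent except that for each $u<v\le n_c$, $\mathrm{corr}(A_{uv},B_{uv}) = R_{uv}$. (Thus vertex $u\in[n_c]$ of $A$ truly corresponds to vertex $u$ of $B$.) Graph matching with padding: given padded $n\times n$ matrices $\tilde A, \tilde B$, consider the problem $\operatorname{argmax}_{P \in \mathcal{P}_n} \operatorname{trace}(\tilde A P \tilde B P^T)$ (equivalently $\operatorname{argmin}_P \|\tilde A - P\tilde B P^T\|_F$), where $\mathcal{P}_n$ is the set of $n\times n$ permutation matrices; $P^*$ denotes the order-$n_c$ principal submatrix of a solution. The naive padding scheme uses $\tilde A = A \oplus \mathbf{0}_{n-n_c}$ and $\tilde B = B$, where $M\oplus M' = \begin{pmatrix} M & 0\\ 0 & M'\end{pmatrix}$ and $\mathbf{0}_k$ is the $k\times k$ zero matrix. *)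

theory Defs
  imports "HOL-Probability.Probability" "HOL-Combinatorics.Permutations"
begin

text \<open>Matrices are functions nat => nat => _, indices 0-based: an n x n matrix uses
  indices in {0..<n}; the order-k principal submatrix uses indices in {0..<k}.\<close>

text \<open>Joint law of one correlated edge pair (A_uv, B_uv): both marginals Bernoulli(p),
  correlation r (for p in (0,1), r in [0,1]): with prob. r the two coincide,
  otherwise they are independent.  P(1,1) = p^2 + r p (1-p).\<close>
definition corr_pair :: "real \<Rightarrow> real \<Rightarrow> (bool \<times> bool) pmf" where
  "corr_pair p r = bind_pmf (bernoulli_pmf r) (\<lambda>c.
     if c then map_pmf (\<lambda>x. (x, x)) (bernoulli_pmf p)
     else pair_pmf (bernoulli_pmf p) (bernoulli_pmf p))"

definition vertex_pairs :: "nat \<Rightarrow> (nat \<times> nat) set" where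
  "vertex_pairs n = {(u, v). u < v \<and> v < n}"

text \<open>Law of the pair (A_uv, B_uv) for u < v < n; for v >= nc there is no A-edge
  (the first component is the dummy value False).\<close>
definition edge_pmf :: "nat \<Rightarrow> (nat \<Rightarrow> nat \<Rightarrow> real) \<Rightarrow> (nat \<Rightarrow> nat \<Rightarrow> real)
    \<Rightarrow> nat \<times> nat \<Rightarrow> (bool \<times> bool) pmf" where
  "edge_pmf nc \<Lambda> R e = (case e of (u, v) \<Rightarrow>
     if v < nc then corr_pair (\<Lambda> u v) (R u v)
     else map_pmf (\<lambda>b. (False, b)) (bernoulli_pmf (\<Lambda> u v)))"

definition CorrER :: "nat \<Rightarrow> nat \<Rightarrow> (nat \<Rightarrow> nat \<Rightarrow> real) \<Rightarrow> (nat \<Rightarrow> nat \<Rightarrow> real)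
    \<Rightarrow> ((nat \<Rightarrow> nat \<Rightarrow> bool) \<times> (nat \<Rightarrow> nat \<Rightarrow> bool)) pmf" where
  "CorrER n nc \<Lambda> R = map_pmf (\<lambda>f.
      ((\<lambda>u v. u < nc \<and> v < nc \<and> u \<noteq> v \<and> fst (f (min u v, max u v))),
       (\<lambda>u v. u < n \<and> v < n \<and> u \<noteq> v \<and> snd (f (min u v, max u v)))))
    (Pi_pmf (vertex_pairs n) (False, False) (edge_pmf nc \<Lambda> R))"

definition perm_mat :: "(nat \<Rightarrow> nat) \<Rightarrow> nat \<Rightarrow> nat \<Rightarrow> real" where
  "perm_mat \<pi> i j = (if \<pi> i = j then 1 else 0)"

definition naive_pad :: "nat \<Rightarrow> (nat \<Rightarrow> nat \<Rightarrow> bool) \<Rightarrow> nat \<Rightarrow> nat \<Rightarrow> real" where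
  "naive_pad nc A i j = (if i < nc \<and> j < nc then of_bool (A i j) else 0)"

text \<open>trace(At P Bt P^T) for n x n matrices.\<close>
definition gm_objective :: "nat \<Rightarrow> (nat \<Rightarrow> nat \<Rightarrow> real) \<Rightarrow> (nat \<Rightarrow> nat \<Rightarrow> real)
    \<Rightarrow> (nat \<Rightarrow> nat) \<Rightarrow> real" where
  "gm_objective n At Bt \<pi> =
     (\<Sum>i<n. \<Sum>j<n. \<Sum>k<n. \<Sum>l<n. At i j * perm_mat \<pi> j k * Bt k l * perm_mat \<pi> i l)"

definition gm_solution :: "nat \<Rightarrow> (nat \<Rightarrow> nat \<Rightarrow> real) \<Rightarrow> (nat \<Rightarrow> nat \<Rightarrow> real)
    \<Rightarrow> (nat \<Rightarrow> nat) \<Rightarrow> bool" where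
  "gm_solution n At Bt \<pi> \<longleftrightarrow> \<pi> permutes {..<n} \<and>
     (\<forall>\<sigma>. \<sigma> permutes {..<n} \<longrightarrow> gm_objective n At Bt \<sigma> \<le> gm_objective n At Bt \<pi>)"

definition principal_is_identity :: "nat \<Rightarrow> (nat \<Rightarrow> nat) \<Rightarrow> bool" where
  "principal_is_identity nc \<pi> \<longleftrightarrow>
     (\<forall>i<nc. \<forall>j<nc. perm_mat \<pi> i j = (if i = j then 1 else 0))"

definition naive_mismatch :: "nat \<Rightarrow> nat \<Rightarrow> (nat \<Rightarrow> nat \<Rightarrow> bool) \<Rightarrow> (nat \<Rightarrow> nat \<Rightarrow> bool) \<Rightarrow> bool" where
  "naive_mismatch n nc A B \<longleftrightarrow>
     \<not> (\<exists>\<pi>. gm_solution n (naive_pad nc A) (\<lambda>i j. of_bool (B i j)) \<pi> \<and> principal_is_identity nc \<pi>)"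

end

theory Submission
  imports Defs
begin

text \<open>Take \<open>\<Lambda> = 1\<close> outside the core block, so that in \<open>B\<close> every vertex pair meeting a
  padding vertex is an edge. The permutation swapping the core \<open>{0..<nc}\<close> with \<open>{nc..<2 nc}\<close>
  then maps every edge of the padded \<open>A\<close> onto an edge of \<open>B\<close>, so it strictly beats every
  permutation that is the identity on the core as soon as one edge of \<open>A\<close> is missing in \<open>B\<close>.
  A core pair \<open>u v\<close> is such a missing edge with probability
  \<open>(1 - R u v) \<Lambda> u v (1 - \<Lambda> u v) \<ge> (1 - \<rho>) (1 - \<beta>) \<Lambda> u v\<close>, independently over the
  \<open>nc (nc - 1) / 2\<close> core pairs. With \<open>\<Lambda> u v \<ge> M log nc / nc\<close> for a suitable constant \<open>M\<close>, no
  pair is missing with probability at most \<open>exp (- (nc - 1) log nc) \<le> exp (- \<epsilon>\<^sup>2 (log nc)\<^sup>2)\<close>.\<close>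

lemma prob_corr_pair_not_True_False:
  assumes "0 \<le> p" "p \<le> 1" "0 \<le> r" "r \<le> 1"
  shows "measure_pmf.prob (corr_pair p r) (- {(True, False)}) = 1 - (1 - r) * p * (1 - p)"
proof -
  have "pmf (corr_pair p r) (True, False) = (1 - r) * p * (1 - p)"
    using assms by (simp add: corr_pair_def pmf_bind pmf_pair pmf_map vimage_def)
  moreover have "- {(True, False)} = space (measure_pmf (corr_pair p r)) - {(True, False)}"
    by auto
  ultimately show ?thesis
    using measure_pmf.prob_compl[of "{(True, False)}" "corr_pair p r"]
    by (simp add: measure_pmf_single)
qed

lemma prob_corr_pair_not_True_False_le:
  assumes "0 \<le> r" "r \<le> \<rho>" "\<rho> \<le> 1" "0 \<le> c" "c \<le> p" "p \<le> \<beta>" "\<beta> \<le> 1"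
  shows "measure_pmf.prob (corr_pair p r) (- {(True, False)}) \<le> exp (- ((1 - \<rho>) * (1 - \<beta>) * c))"
proof -
  have "(1 - \<rho>) * (1 - \<beta>) * c \<le> (1 - r) * (1 - p) * p"
    using assms by (intro mult_mono) auto
  then have "1 - (1 - r) * p * (1 - p) \<le> 1 + - ((1 - \<rho>) * (1 - \<beta>) * c)"
    by (simp add: algebra_simps)
  also have "\<dots> \<le> exp (- ((1 - \<rho>) * (1 - \<beta>) * c))"
    by (rule exp_ge_add_one_self)
  finally show ?thesis
    using assms by (simp add: prob_corr_pair_not_True_False)
qed

lemma measure_Pi_pmf_avoid_le:
  assumes "finite V" "W \<subseteq> V"
    and factor: "\<And>e. e \<in> W \<Longrightarrow> measure_pmf.prob (p e) (- {a}) \<le> exp (- K)"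
  shows "measure_pmf.prob (Pi_pmf V d p) (Pi V (\<lambda>e. if e \<in> W then - {a} else UNIV))
           \<le> exp (- (real (card W) * K))"
proof -
  have "measure_pmf.prob (Pi_pmf V d p) (Pi V (\<lambda>e. if e \<in> W then - {a} else UNIV))
      = (\<Prod>e\<in>V. if e \<in> W then measure_pmf.prob (p e) (- {a}) else 1)"
    using assms(1) by (simp add: measure_Pi_pmf_Pi if_distrib cong: if_cong)
  also have "\<dots> = (\<Prod>e\<in>W. measure_pmf.prob (p e) (- {a}))"
    using assms(1,2) by (simp add: prod.If_cases Int_absorb1)
  also have "\<dots> \<le> (\<Prod>e\<in>W. exp (- K))"
    using factor by (intro prod_mono) auto
  also have "\<dots> = exp (- (real (card W) * K))"
    by (simp add: exp_of_nat_mult[symmetric])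
  finally show ?thesis .
qed

lemma finite_vertex_pairs: "finite (vertex_pairs n)"
  by (rule finite_subset[of _ "{..<n} \<times> {..<n}"]) (auto simp: vertex_pairs_def)

lemma card_vertex_pairs: "card (vertex_pairs n) * 2 = n * (n - 1)"
proof (induction n)
  case 0
  then show ?case by (simp add: vertex_pairs_def)
next
  case (Suc n)
  have split: "vertex_pairs (Suc n) = vertex_pairs n \<union> (\<lambda>u. (u, n)) ` {..<n}"
    by (auto simp: vertex_pairs_def)
  have "card (vertex_pairs (Suc n)) = card (vertex_pairs n) + n"
    unfolding split
    by (subst card_Un_disjoint)
      (auto simp: finite_vertex_pairs[unfolded vertex_pairs_def] card_image inj_on_def vertex_pairs_def)
  with Suc show ?case by (cases n) (auto simp: algebra_simps)
qed

lemma vertex_pairs_mono: "m \<le> n \<Longrightarrow> vertex_pairs m \<subseteq> vertex_pairs n"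
  by (auto simp: vertex_pairs_def)

lemma gm_objective_permutes:
  assumes "\<sigma> permutes {..<n}"
  shows "gm_objective n At Bt \<sigma> = (\<Sum>(i, j)\<in>{..<n} \<times> {..<n}. At i j * Bt (\<sigma> j) (\<sigma> i))"
proof -
  have "(\<Sum>k<n. \<Sum>l<n. At i j * perm_mat \<sigma> j k * Bt k l * perm_mat \<sigma> i l)
      = At i j * Bt (\<sigma> j) (\<sigma> i)" if "i < n" "j < n" for i j
    using permutes_in_image[OF assms] that
    by (simp add: perm_mat_def if_distrib[of "\<lambda>x. _ * x"] if_distrib[of "\<lambda>x. x * _"]
        sum.delta sum.delta' cong: if_cong)
  then show ?thesis
    by (simp add: gm_objective_def sum.cartesian_product[symmetric])
qed

definition swap_blocks :: "nat \<Rightarrow> nat \<Rightarrow> nat" where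
  "swap_blocks k i = (if i < k then i + k else if i < 2 * k then i - k else i)"

lemma swap_blocks_permutes:
  assumes "2 * k \<le> n"
  shows "swap_blocks k permutes {..<n}"
proof (rule bij_imp_permutes)
  show "bij_betw (swap_blocks k) {..<n} {..<n}"
    by (rule bij_betw_byWitness[where f' = "swap_blocks k"])
      (use assms in \<open>auto simp: swap_blocks_def\<close>)
  show "swap_blocks k x = x" if "x \<notin> {..<n}" for x
    using assms that by (auto simp: swap_blocks_def)
qed

lemma naive_mismatch_if_edge_missing:
  assumes n: "2 * nc \<le> n"
    and A_irrefl: "\<And>i. \<not> A i i"
    and B_sym: "\<And>i j. B i j = B j i"
    and B_complete_on_shift: "\<And>i j. i < nc \<Longrightarrow> j < nc \<Longrightarrow> i \<noteq> j \<Longrightarrow> B (i + nc) (j + nc)"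
    and uv: "u < nc" "v < nc" "A u v" "\<not> B u v"
  shows "naive_mismatch n nc A B"
  unfolding naive_mismatch_def
proof
  assume "\<exists>\<pi>. gm_solution n (naive_pad nc A) (\<lambda>i j. of_bool (B i j)) \<pi> \<and> principal_is_identity nc \<pi>"
  then obtain \<pi> where sol: "gm_solution n (naive_pad nc A) (\<lambda>i j. of_bool (B i j)) \<pi>"
    and id: "principal_is_identity nc \<pi>"
    by blast
  define At where "At = naive_pad nc A"
  define Bt where "Bt = (\<lambda>i j. of_bool (B i j) :: real)"
  define s where "s = swap_blocks nc"
  have \<pi>_perm: "\<pi> permutes {..<n}" and s_perm: "s permutes {..<n}"
    using sol swap_blocks_permutes[OF n] by (simp_all add: gm_solution_def s_def)
  have \<pi>_core: "\<pi> i = i" if "i < nc" for i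
    using id that unfolding principal_is_identity_def perm_mat_def
    by (metis (mono_tags) zero_neq_one)
  have le: "At i j * Bt (\<pi> j) (\<pi> i) \<le> At i j * Bt (s j) (s i)" for i j
  proof (cases "i < nc \<and> j < nc \<and> A i j")
    case True
    then have "B (s j) (s i)"
      using A_irrefl B_complete_on_shift[of j i] by (auto simp: s_def swap_blocks_def)
    with True show ?thesis by (simp add: At_def Bt_def naive_pad_def)
  qed (auto simp: At_def naive_pad_def)
  have lt: "\<exists>i<n. \<exists>j<n. At i j * Bt (\<pi> j) (\<pi> i) < At i j * Bt (s j) (s i)"
  proof -
    have "B (s v) (s u)"
      using uv A_irrefl B_complete_on_shift[of v u] by (auto simp: s_def swap_blocks_def)
    then have "At u v * Bt (\<pi> v) (\<pi> u) < At u v * Bt (s v) (s u)"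
      using uv B_sym[of u v] \<pi>_core by (simp add: At_def Bt_def naive_pad_def)
    moreover have "u < n" "v < n"
      using uv n by auto
    ultimately show ?thesis by blast
  qed
  have "gm_objective n At Bt \<pi> < gm_objective n At Bt s"
    unfolding gm_objective_permutes[OF \<pi>_perm] gm_objective_permutes[OF s_perm]
    by (rule sum_strict_mono_ex1) (use le lt in auto)
  moreover have "gm_objective n At Bt s \<le> gm_objective n At Bt \<pi>"
    using sol s_perm by (simp add: gm_solution_def At_def Bt_def)
  ultimately show False by simp
qed

definition complete_padding :: "nat \<Rightarrow> (nat \<Rightarrow> nat \<Rightarrow> real) \<Rightarrow> nat \<Rightarrow> nat \<Rightarrow> real" where
  "complete_padding nc \<Lambda>c u v = (if u < nc \<and> v < nc then \<Lambda>c u v else 1)"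

definition graphs_of_edge_pairs :: "nat \<Rightarrow> nat \<Rightarrow> (nat \<times> nat \<Rightarrow> bool \<times> bool)
    \<Rightarrow> (nat \<Rightarrow> nat \<Rightarrow> bool) \<times> (nat \<Rightarrow> nat \<Rightarrow> bool)" where
  "graphs_of_edge_pairs n nc f =
     ((\<lambda>u v. u < nc \<and> v < nc \<and> u \<noteq> v \<and> fst (f (min u v, max u v))),
      (\<lambda>u v. u < n \<and> v < n \<and> u \<noteq> v \<and> snd (f (min u v, max u v))))"

lemma CorrER_eq_map_Pi_pmf:
  "CorrER n nc \<Lambda> R =
     map_pmf (graphs_of_edge_pairs n nc) (Pi_pmf (vertex_pairs n) (False, False) (edge_pmf nc \<Lambda> R))"
  by (simp add: CorrER_def graphs_of_edge_pairs_def [abs_def])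

lemma padding_edge_present:
  assumes "f \<in> set_pmf (Pi_pmf (vertex_pairs n) d (edge_pmf nc (complete_padding nc \<Lambda>c) R))"
    and "a < b" "b < n" "nc \<le> b"
  shows "snd (f (a, b))"
proof -
  have "(a, b) \<in> vertex_pairs n"
    using assms by (simp add: vertex_pairs_def)
  then have "f (a, b) \<in> set_pmf (edge_pmf nc (complete_padding nc \<Lambda>c) R (a, b))"
    using assms(1) by (auto simp: set_Pi_pmf finite_vertex_pairs PiE_dflt_def)
  then obtain x where "x \<in> set_pmf (bernoulli_pmf 1)" "f (a, b) = (False, x)"
    using assms by (auto simp: edge_pmf_def complete_padding_def)
  then show ?thesis
    by (cases x) (auto simp: set_pmf_iff)
qed

lemma naive_mismatch_if_core_pair_flipped:
  assumes f: "f \<in> set_pmf (Pi_pmf (vertex_pairs n) d (edge_pmf nc (complete_padding nc \<Lambda>c) R))"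
    and n: "2 * nc \<le> n"
    and flipped: "e \<in> vertex_pairs nc" "f e = (True, False)"
  shows "case_prod (naive_mismatch n nc) (graphs_of_edge_pairs n nc f)"
proof -
  obtain u v where e: "e = (u, v)" "u < v" "v < nc"
    using flipped(1) by (auto simp: vertex_pairs_def)
  show ?thesis
    unfolding graphs_of_edge_pairs_def prod.case
  proof (rule naive_mismatch_if_edge_missing[OF n, of _ _ u v])
    fix i j assume "i < nc" "j < nc" "i \<noteq> j"
    then show "i + nc < n \<and> j + nc < n \<and> i + nc \<noteq> j + nc \<and>
        snd (f (min (i + nc) (j + nc), max (i + nc) (j + nc)))"
      using padding_edge_present[OF f] n by (auto simp: min_def max_def)
  qed (use e flipped n in \<open>auto simp: min.commute max.commute\<close>)
qed

lemma prob_naive_mismatch_ge: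
  assumes n: "0 < nc" "2 * nc \<le> n"
    and R: "\<forall>u<nc. \<forall>v<nc. 0 \<le> R u v \<and> R u v \<le> \<rho>" and "\<rho> \<le> 1"
    and \<Lambda>c: "\<forall>u<nc. \<forall>v<nc. u \<noteq> v \<longrightarrow> c \<le> \<Lambda>c u v \<and> \<Lambda>c u v \<le> \<beta>" and "\<beta> \<le> 1" "0 \<le> c"
  shows "measure_pmf.prob (CorrER n nc (complete_padding nc \<Lambda>c) R) {(A, B). naive_mismatch n nc A B}
           \<ge> 1 - exp (- ((1 - \<rho>) * (1 - \<beta>) * c * (real nc * (real nc - 1) / 2)))"
proof -
  define P where "P = Pi_pmf (vertex_pairs n) (False, False) (edge_pmf nc (complete_padding nc \<Lambda>c) R)"
  define no_flip where
    "no_flip = Pi (vertex_pairs n) (\<lambda>e. if e \<in> vertex_pairs nc then - {(True, False)} else UNIV)"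
  have "real (card (vertex_pairs nc) * 2) = real (nc * (nc - 1))"
    by (simp only: card_vertex_pairs)
  then have card: "real (card (vertex_pairs nc)) = real nc * (real nc - 1) / 2"
    using n(1) by (simp add: of_nat_diff)
  have "measure_pmf.prob P no_flip \<le> exp (- (real (card (vertex_pairs nc)) * ((1 - \<rho>) * (1 - \<beta>) * c)))"
    unfolding P_def no_flip_def
  proof (rule measure_Pi_pmf_avoid_le[OF finite_vertex_pairs vertex_pairs_mono])
    fix e assume "e \<in> vertex_pairs nc"
    then obtain u v where "e = (u, v)" "u < v" "v < nc"
      by (auto simp: vertex_pairs_def)
    then show "measure_pmf.prob (edge_pmf nc (complete_padding nc \<Lambda>c) R e) (- {(True, False)})
        \<le> exp (- ((1 - \<rho>) * (1 - \<beta>) * c))"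
      using R \<Lambda>c assms(4,6,7)
      by (simp add: edge_pmf_def complete_padding_def prob_corr_pair_not_True_False_le)
  qed (use n in auto)
  moreover have "measure_pmf.prob P (- no_flip) \<le> measure_pmf.prob P
      (graphs_of_edge_pairs n nc -` {(A, B). naive_mismatch n nc A B})"
  proof (rule measure_pmf.finite_measure_mono_AE)
    show "AE f in measure_pmf P. f \<in> - no_flip \<longrightarrow>
        f \<in> graphs_of_edge_pairs n nc -` {(A, B). naive_mismatch n nc A B}"
    proof (rule AE_pmfI, rule impI)
      fix f assume "f \<in> set_pmf P" "f \<in> - no_flip"
      then show "f \<in> graphs_of_edge_pairs n nc -` {(A, B). naive_mismatch n nc A B}"
        using naive_mismatch_if_core_pair_flipped[of f n] n
        by (fastforce simp: P_def no_flip_def split: if_splits)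
    qed
  qed simp
  moreover have "measure_pmf.prob P (- no_flip) = 1 - measure_pmf.prob P no_flip"
    using measure_pmf.prob_compl[of no_flip P] by (simp add: Compl_eq_Diff_UNIV)
  ultimately show ?thesis
    by (simp add: CorrER_eq_map_Pi_pmf P_def card mult_ac)
qed

lemma sq_mult_ln_sq_le:
  fixes x \<epsilon> :: real
  assumes "1 \<le> x" "\<epsilon>\<^sup>2 \<le> 1"
  shows "\<epsilon>\<^sup>2 * (ln x)\<^sup>2 \<le> (x - 1) * ln x"
proof -
  have "0 \<le> ln x" "ln x \<le> x - 1"
    using assms(1) by (auto simp: ln_le_minus_one)
  have "\<epsilon>\<^sup>2 * (ln x)\<^sup>2 \<le> ln x * ln x"
    using assms(2) by (simp add: power2_eq_square mult_left_le_one_le)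
  also have "\<dots> \<le> (x - 1) * ln x"
    using \<open>ln x \<le> x - 1\<close> \<open>0 \<le> ln x\<close> by (rule mult_right_mono)
  finally show ?thesis .
qed

lemma prob_naive_mismatch_ge_exp_ln_sq:
  assumes n: "0 < nc" "2 * nc \<le> n"
    and R: "\<forall>u<nc. \<forall>v<nc. 0 \<le> R u v \<and> R u v \<le> \<rho>" and "\<rho> < 1"
    and \<Lambda>c: "\<forall>u<nc. \<forall>v<nc. u \<noteq> v \<longrightarrow>
          2 / ((1 - \<rho>) * (1 - \<beta>)) * (ln (real nc) / real nc) \<le> \<Lambda>c u v \<and> \<Lambda>c u v \<le> \<beta>"
    and "\<beta> < 1" "\<epsilon>\<^sup>2 \<le> 1"
  shows "measure_pmf.prob (CorrER n nc (complete_padding nc \<Lambda>c) R) {(A, B). naive_mismatch n nc A B}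
           \<ge> 1 - exp (- \<epsilon>\<^sup>2 * (ln (real nc))\<^sup>2)"
proof -
  define x where "x = real nc"
  define c where "c = 2 / ((1 - \<rho>) * (1 - \<beta>)) * (ln x / x)"
  have x: "1 \<le> x" using n(1) by (simp add: x_def)
  have "0 \<le> c" using x assms(4,6) by (simp add: c_def)
  have "(1 - \<rho>) * (1 - \<beta>) * c = 2 * ln x / x"
    using assms(4,6) by (simp add: c_def)
  then have exponent: "(1 - \<rho>) * (1 - \<beta>) * c * (x * (x - 1) / 2) = (x - 1) * ln x"
    using x by simp
  have "1 - exp (- \<epsilon>\<^sup>2 * (ln x)\<^sup>2) \<le> 1 - exp (- ((1 - \<rho>) * (1 - \<beta>) * c * (x * (x - 1) / 2)))"
    unfolding exponent using sq_mult_ln_sq_le[OF x assms(7)] by simp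
  also have "\<dots> \<le> measure_pmf.prob (CorrER n nc (complete_padding nc \<Lambda>c) R)
      {(A, B). naive_mismatch n nc A B}"
  proof -
    have "\<forall>u<nc. \<forall>v<nc. u \<noteq> v \<longrightarrow> c \<le> \<Lambda>c u v \<and> \<Lambda>c u v \<le> \<beta>"
      using \<Lambda>c by (simp add: c_def x_def)
    from prob_naive_mismatch_ge[OF n R _ this _ \<open>0 \<le> c\<close>] show ?thesis
      using assms(4,6) by (simp add: x_def)
  qed
  finally show ?thesis by (simp add: x_def)
qed

lemma eventually_complete_padding_naive_mismatch:
  fixes nc :: "nat \<Rightarrow> nat" and R \<Lambda>c :: "nat \<Rightarrow> nat \<Rightarrow> nat \<Rightarrow> real"
  assumes sizes: "\<forall>\<^sub>F n in sequentially. 0 < nc n \<and> 2 * nc n \<le> n"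
    and R: "\<And>n u v. u < nc n \<Longrightarrow> v < nc n \<Longrightarrow> 0 \<le> R n u v \<and> R n u v \<le> \<rho>" and "\<rho> < 1"
    and \<Lambda>c: "\<And>n u v. u < nc n \<Longrightarrow> v < nc n \<Longrightarrow>
          0 \<le> \<Lambda>c n u v \<and> \<Lambda>c n u v \<le> \<beta> \<and> \<Lambda>c n u v = \<Lambda>c n v u" and "\<beta> < 1"
    and \<Lambda>c_large: "\<forall>\<^sub>F n in sequentially. \<forall>u<nc n. \<forall>v<nc n. u \<noteq> v \<longrightarrow>
          2 / ((1 - \<rho>) * (1 - \<beta>)) * (ln (real (nc n)) / real (nc n)) \<le> \<Lambda>c n u v"
    and "\<epsilon>\<^sup>2 \<le> 1"
  shows "\<forall>\<^sub>F n in sequentially.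
    (\<forall>u<n. \<forall>v<n. 0 \<le> complete_padding (nc n) (\<Lambda>c n) u v \<and> complete_padding (nc n) (\<Lambda>c n) u v \<le> 1
       \<and> complete_padding (nc n) (\<Lambda>c n) u v = complete_padding (nc n) (\<Lambda>c n) v u) \<and>
    (\<forall>u<nc n. \<forall>v<nc n. complete_padding (nc n) (\<Lambda>c n) u v = \<Lambda>c n u v) \<and>
    measure_pmf.prob (CorrER n (nc n) (complete_padding (nc n) (\<Lambda>c n)) (R n))
      {(A, B). naive_mismatch n (nc n) A B} \<ge> 1 - exp (- \<epsilon>\<^sup>2 * (ln (real (nc n)))\<^sup>2)"
  using eventually_conj[OF sizes \<Lambda>c_large]
proof (rule eventually_mono, intro conjI)
  fix n assume "(0 < nc n \<and> 2 * nc n \<le> n) \<and> (\<forall>u<nc n. \<forall>v<nc n. u \<noteq> v \<longrightarrow>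
      2 / ((1 - \<rho>) * (1 - \<beta>)) * (ln (real (nc n)) / real (nc n)) \<le> \<Lambda>c n u v)"
  then show "measure_pmf.prob (CorrER n (nc n) (complete_padding (nc n) (\<Lambda>c n)) (R n))
      {(A, B). naive_mismatch n (nc n) A B} \<ge> 1 - exp (- \<epsilon>\<^sup>2 * (ln (real (nc n)))\<^sup>2)"
    using R \<Lambda>c assms(3,5,7) by (intro prob_naive_mismatch_ge_exp_ln_sq[where \<rho> = \<rho> and \<beta> = \<beta>]) auto
qed (use \<Lambda>c \<open>\<beta> < 1\<close> in \<open>auto simp: complete_padding_def intro: order_trans[OF _ less_imp_le]\<close>)

theorem theorem1:
  shows "\<exists>C>0. \<forall>(nc :: nat \<Rightarrow> nat) (\<rho> :: real) (\<beta> :: real)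
      (R :: nat \<Rightarrow> nat \<Rightarrow> nat \<Rightarrow> real) (\<Lambda>c :: nat \<Rightarrow> nat \<Rightarrow> nat \<Rightarrow> real).
    filterlim nc at_top at_top \<longrightarrow>
    (\<forall>\<^sub>F n in sequentially. 0 < nc n \<and> 2 * nc n < n) \<longrightarrow>
    0 < \<rho> \<longrightarrow> \<rho> < 1 \<longrightarrow> 0 < \<beta> \<longrightarrow> \<beta> < 1 \<longrightarrow>
    (\<forall>n. \<forall>u<nc n. \<forall>v<nc n. 0 \<le> R n u v \<and> R n u v \<le> 1 \<and> R n u v = R n v u \<and> R n u v < \<rho>) \<longrightarrow>
    (\<forall>n. \<forall>u<nc n. \<forall>v<nc n. 0 \<le> \<Lambda>c n u v \<and> \<Lambda>c n u v \<le> 1 \<and> \<Lambda>c n u v = \<Lambda>c n v u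
        \<and> \<Lambda>c n u v \<le> \<beta>) \<longrightarrow>
    (\<forall>M>0. \<forall>\<^sub>F n in sequentially. \<forall>u<nc n. \<forall>v<nc n. u \<noteq> v \<longrightarrow>
        \<Lambda>c n u v \<ge> M * (ln (real (nc n)) / real (nc n))) \<longrightarrow>
    (\<forall>\<epsilon>. 0 < \<epsilon> \<and> \<epsilon> < 1 - \<beta> - (1 - \<beta>) * \<rho> \<longrightarrow>
      (\<exists>\<Lambda> :: nat \<Rightarrow> nat \<Rightarrow> nat \<Rightarrow> real. \<forall>\<^sub>F n in sequentially.
         (\<forall>u<n. \<forall>v<n. 0 \<le> \<Lambda> n u v \<and> \<Lambda> n u v \<le> 1 \<and> \<Lambda> n u v = \<Lambda> n v u) \<and>
         (\<forall>u<nc n. \<forall>v<nc n. \<Lambda> n u v = \<Lambda>c n u v) \<and>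
         measure_pmf.prob (CorrER n (nc n) (\<Lambda> n) (R n))
             {(A, B). naive_mismatch n (nc n) A B}
           \<ge> 1 - exp (- C * \<epsilon>^2 * (ln (real (nc n)))^2)))"
proof (rule exI[of _ 1], intro conjI allI impI)
  fix nc :: "nat \<Rightarrow> nat" and \<rho> \<beta> :: real and R \<Lambda>c :: "nat \<Rightarrow> nat \<Rightarrow> nat \<Rightarrow> real" and \<epsilon> :: real
  assume "filterlim nc at_top at_top"
    and sizes: "\<forall>\<^sub>F n in sequentially. 0 < nc n \<and> 2 * nc n < n"
    and "0 < \<rho>" "\<rho> < 1" "0 < \<beta>" "\<beta> < 1"
    and R: "\<forall>n. \<forall>u<nc n. \<forall>v<nc n. 0 \<le> R n u v \<and> R n u v \<le> 1 \<and> R n u v = R n v u \<and> R n u v < \<rho>"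
    and \<Lambda>c: "\<forall>n. \<forall>u<nc n. \<forall>v<nc n. 0 \<le> \<Lambda>c n u v \<and> \<Lambda>c n u v \<le> 1 \<and> \<Lambda>c n u v = \<Lambda>c n v u
        \<and> \<Lambda>c n u v \<le> \<beta>"
    and \<Lambda>c_large: "\<forall>M>0. \<forall>\<^sub>F n in sequentially. \<forall>u<nc n. \<forall>v<nc n. u \<noteq> v \<longrightarrow>
        \<Lambda>c n u v \<ge> M * (ln (real (nc n)) / real (nc n))"
    and \<epsilon>: "0 < \<epsilon> \<and> \<epsilon> < 1 - \<beta> - (1 - \<beta>) * \<rho>"
  have "\<epsilon> \<le> 1"
    using \<epsilon> \<open>0 < \<rho>\<close> \<open>0 < \<beta>\<close> \<open>\<beta> < 1\<close> by (smt (verit) mult_pos_pos)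
  then have "\<epsilon>\<^sup>2 \<le> 1"
    using \<epsilon> by (simp add: power_le_one)
  have "\<forall>\<^sub>F n in sequentially. 0 < nc n \<and> 2 * nc n \<le> n"
    using sizes by (rule eventually_mono) simp
  from eventually_complete_padding_naive_mismatch[OF this _ \<open>\<rho> < 1\<close> _ \<open>\<beta> < 1\<close> _ \<open>\<epsilon>\<^sup>2 \<le> 1\<close>]
  show "\<exists>\<Lambda>. \<forall>\<^sub>F n in sequentially.
         (\<forall>u<n. \<forall>v<n. 0 \<le> \<Lambda> n u v \<and> \<Lambda> n u v \<le> 1 \<and> \<Lambda> n u v = \<Lambda> n v u) \<and>
         (\<forall>u<nc n. \<forall>v<nc n. \<Lambda> n u v = \<Lambda>c n u v) \<and>
         measure_pmf.prob (CorrER n (nc n) (\<Lambda> n) (R n)) {(A, B). naive_mismatch n (nc n) A B}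
           \<ge> 1 - exp (- 1 * \<epsilon>\<^sup>2 * (ln (real (nc n)))\<^sup>2)"
    using R \<Lambda>c \<Lambda>c_large[rule_format, of "2 / ((1 - \<rho>) * (1 - \<beta>))"] \<open>\<rho> < 1\<close> \<open>\<beta> < 1\<close>
    by (intro exI[of _ "\<lambda>n. complete_padding (nc n) (\<Lambda>c n)"]) (simp add: less_imp_le)
qed simp

end
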